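(* Let $\lambda=\min\{1+\frac{1}{2\alpha},1+\sqrt3\}$ and $\phi_*(v)=\psi(2\alpha)-\ln(1+v)$. Let $\phi:[1,\infty)\to\mathbb R$ be measurable with $d_\phi(X_1,X_2)=\ln Z_1-\phi(V)$, $V=Z_2/Z_1$, having finite risk, and suppose $\mathbb P_{\underline\theta}(V\le\lambda\text{ and }\phi(V)>\phi_*(V))>0$ for some $\underline\theta\in\Theta$. Define $$\phi^I(v)=\begin{cases}\phi_*(v), & \text{if } \phi(v)>\phi_*(v)\text{ and } v\le\lambda,\\ \phi(v), & \text{otherwise.}\end{cases}$$ Then $d^I_\phi(X_1,X_2)=\ln Z_1-\phi^I(V)$ dominates $d_\phi$ for estimating $H_M(\underline\theta)$ under squared error loss.
   Context: Fix a known $\alpha>0$. $X_1,X_2$ are independent, $X_i$ having density $f(x\mid\theta_i)=\frac{x^{\alpha-1}e^{-x/\theta_i}}{\Gamma(\alpha)\theta_i^{\alpha}}$, $x>0$, with unknown $\underline\theta=(\theta_1,\theta_2)\in\Theta=(0,\infty)^2$. $Z_1=\min\{X_1,X_2\}$, $Z_2=\max\{X_1,X_2\}$. $H_M(\underline\theta)=\ln\theta_1\, I(X_1\le X_2)+\ln\theta_2\, I(X_1>X_2)$. $\psi$ is the digamma function. Risk: $R(\underline\theta,d)=\mathbb E_{\underline\theta}(d(X_1,X_2)-H_M(\underline\theta))^2$; $d'$ dominates $d$ if $R(\underline\theta,d')\le R(\underline\theta,d)$ for all $\underline\theta$ with strict inequality for some $\underline\theta$. *)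

theory Defs
  imports "HOL-Probability.Probability"
begin

definition gamma_dens :: "real \<Rightarrow> real \<Rightarrow> real \<Rightarrow> real" where
  "gamma_dens \<alpha> \<theta> x =
     (if x > 0 then x powr (\<alpha> - 1) * exp (- x / \<theta>) / (Gamma \<alpha> * \<theta> powr \<alpha>) else 0)"

definition joint_law :: "real \<Rightarrow> real \<times> real \<Rightarrow> (real \<times> real) measure" where
  "joint_law \<alpha> \<theta> = density (lborel \<Otimes>\<^sub>M lborel)
     (\<lambda>(x1, x2). ennreal (gamma_dens \<alpha> (fst \<theta>) x1 * gamma_dens \<alpha> (snd \<theta>) x2))"

definition H_M :: "real \<times> real \<Rightarrow> real \<times> real \<Rightarrow> real" where
  "H_M \<theta> x = (if fst x \<le> snd x then ln (fst \<theta>) else ln (snd \<theta>))"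

definition risk :: "real \<Rightarrow> real \<times> real \<Rightarrow> (real \<times> real \<Rightarrow> real) \<Rightarrow> ennreal" where
  "risk \<alpha> \<theta> d = (\<integral>\<^sup>+ x. ennreal ((d x - H_M \<theta> x)\<^sup>2) \<partial>joint_law \<alpha> \<theta>)"

definition Theta :: "(real \<times> real) set" where
  "Theta = {0<..} \<times> {0<..}"

definition dominates :: "real \<Rightarrow> (real \<times> real \<Rightarrow> real) \<Rightarrow> (real \<times> real \<Rightarrow> real) \<Rightarrow> bool" where
  "dominates \<alpha> d' d \<longleftrightarrow>
     (\<forall>\<theta>\<in>Theta. risk \<alpha> \<theta> d' \<le> risk \<alpha> \<theta> d) \<and> (\<exists>\<theta>\<in>Theta. risk \<alpha> \<theta> d' < risk \<alpha> \<theta> d)"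

definition Z1 :: "real \<times> real \<Rightarrow> real" where "Z1 x = min (fst x) (snd x)"
definition Z2 :: "real \<times> real \<Rightarrow> real" where "Z2 x = max (fst x) (snd x)"
definition V :: "real \<times> real \<Rightarrow> real" where "V x = Z2 x / Z1 x"

definition d_phi :: "(real \<Rightarrow> real) \<Rightarrow> real \<times> real \<Rightarrow> real" where
  "d_phi \<phi> x = ln (Z1 x) - \<phi> (V x)"

definition phi_star :: "real \<Rightarrow> real \<Rightarrow> real" where
  "phi_star \<alpha> v = Digamma (2 * \<alpha>) - ln (1 + v)"

definition lam :: "real \<Rightarrow> real" where
  "lam \<alpha> = min (1 + 1 / (2 * \<alpha>)) (1 + sqrt 3)"

definition phi_I :: "real \<Rightarrow> (real \<Rightarrow> real) \<Rightarrow> real \<Rightarrow> real" where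
  "phi_I \<alpha> \<phi> v = (if \<phi> v > phi_star \<alpha> v \<and> v \<le> lam \<alpha> then phi_star \<alpha> v else \<phi> v)"

end

theory Submission
  imports Defs
begin

text \<open>
  Write a point of the open quadrant as \<open>(s, s v)\<close> or \<open>(s v, s)\<close> with \<open>s = Z1\<close> and \<open>v = V \<ge> 1\<close>.
  This change of variables turns the risk of \<open>ln Z1 - \<phi>(V)\<close> into the integral over \<open>v\<close> of a conditional
  risk \<open>Q_v(c)\<close> at \<open>c = \<phi>(v)\<close>, and \<open>Q_v\<close> is a combination of two Gamma(2\<alpha>) log-moment integrals,
  hence a quadratic in \<open>c\<close>. Its closed form (via \<open>\<integral> s^(\<beta>-1) e^(-s) ln s = \<Gamma>(\<beta>) \<psi>(\<beta>)\<close>) gives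
  \<open>Q_v(c) - Q_v(\<phi>_*(v)) = C (c - \<phi>_*(v)) (c - \<phi>_*(v) + 2K)\<close> with \<open>C > 0\<close>, where \<open>K \<ge> 0\<close> by an
  elementary inequality between weighted logarithms, valid as soon as \<open>2\<alpha>(v - 1) \<le> 1\<close>. So lowering
  \<open>\<phi>(v) > \<phi>_*(v)\<close> to \<open>\<phi>_*(v)\<close> strictly lowers \<open>Q_v\<close>, and since \<open>V\<close> has a density the
  improvement set has positive Lebesgue measure.
\<close>

lemma nonneg_if_deriv_nonneg_from:
  fixes f f' :: "real \<Rightarrow> real"
  assumes "f a = 0"
    and "\<And>x. a \<le> x \<Longrightarrow> (f has_real_derivative f' x) (at x)"
    and "\<And>x. a \<le> x \<Longrightarrow> f' x \<ge> 0"
    and "a \<le> x"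
  shows "f x \<ge> 0"
  using DERIV_nonneg_imp_nondecreasing[of a x f] assms by force

definition log_gap :: "real \<Rightarrow> real \<Rightarrow> real" where
  "log_gap v x = 2 * (v - 1) * (ln (1 + v * x) + ln (x + v) - 2 * ln (1 + v) - ln x)
     - (ln (1 + v * x) - ln (x + v)) * (ln (1 + v * x) + ln x - ln (x + v))"

text \<open>
  \<open>log_gap_d1\<close> is \<open>x (1 + v x) (x + v)\<close> times the \<open>x\<close>-derivative of \<open>log_gap\<close>, and each later member of
  the tower is the derivative of the previous one (up to a nonnegative factor for \<open>log_gap_d4_num\<close>).
  All but the polynomial vanish at \<open>x = 1\<close>, so nonnegativity climbs from the polynomial up to \<open>log_gap\<close>.
\<close>

definition log_gap_d1 :: "real \<Rightarrow> real \<Rightarrow> real" where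
  "log_gap_d1 v x = 2 * v * (v - 1) * (x^2 - 1) - (v^2 - 1) * x * (ln (1 + v * x) + ln x - ln (x + v))
     - v * (x^2 + 2 * v * x + 1) * (ln (1 + v * x) - ln (x + v))"

definition log_gap_d2 :: "real \<Rightarrow> real \<Rightarrow> real" where
  "log_gap_d2 v x = 4 * v * (v - 1) * x - 2 * v * (v^2 - 1) * (x^2 + 2 * v * x + 1) / ((1 + v * x) * (x + v))
     - (v^2 - 1) * (ln (1 + v * x) + ln x - ln (x + v)) - 2 * v * (x + v) * (ln (1 + v * x) - ln (x + v))"

definition log_gap_d3 :: "real \<Rightarrow> real \<Rightarrow> real" where
  "log_gap_d3 v x = 4 * v * (v - 1) - 2 * v * (v^2 - 1)^2 * (1 - x^2) / ((1 + v * x) * (x + v))^2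
     - (v^2 - 1) * (v / (1 + v * x) + 1 / x - 1 / (x + v)) - 2 * v * (ln (1 + v * x) - ln (x + v))
     - 2 * v * (v^2 - 1) * (x + v) / ((1 + v * x) * (x + v))"

definition log_gap_d4_num :: "real \<Rightarrow> real \<Rightarrow> real" where
  "log_gap_d4_num v x = 4 * v * (v * v - 1) * (- v * x^3 + 3 * v * x + v * v + 1) * x * x
     + v * v * x * x * (1 + v * x) * (x + v)^3 + (1 + v * x)^3 * (x + v)^3
     - x * x * (1 + v * x)^3 * (x + v) - 4 * v * x * x * (1 + v * x)^2 * (x + v)^2
     + 2 * v * x * x * (1 + v * x) * (x + v)^2 * (1 + 2 * v * x + v * v)"

lemma log_gap_d4_num_nonneg:
  assumes "1 \<le> x" "1 \<le> v"
  shows "0 \<le> log_gap_d4_num v x"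
proof -
  obtain s w where s: "s \<ge> 0" "x = 1 + s" and w: "w \<ge> 0" "v = 1 + w"
    using assms by (metis add.commute diff_add_cancel diff_ge_0_iff_ge)
  have "log_gap_d4_num v x
    = 64 + 288 * w + 496 * w^2 + 424 * w^3 + 192 * w^4 + 44 * w^5 + 4 * w^6
      + 192 * s + 864 * s * w + 1488 * s * w^2 + 1272 * s * w^3 + 576 * s * w^4 + 132 * s * w^5 + 12 * s * w^6
      + 240 * s^2 + 1032 * s^2 * w + 1720 * s^2 * w^2 + 1436 * s^2 * w^3 + 638 * s^2 * w^4 + 142 * s^2 * w^5 + 12 * s^2 * w^6
      + 160 * s^3 + 624 * s^3 * w + 960 * s^3 * w^2 + 752 * s^3 * w^3 + 316 * s^3 * w^4 + 64 * s^3 * w^5 + 4 * s^3 * w^6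
      + 60 * s^4 + 204 * s^4 * w + 271 * s^4 * w^2 + 182 * s^4 * w^3 + 65 * s^4 * w^4 + 10 * s^4 * w^5
      + 12 * s^5 + 36 * s^5 * w + 39 * s^5 * w^2 + 18 * s^5 * w^3 + 3 * s^5 * w^4
      + s^6 + 3 * s^6 * w + 3 * s^6 * w^2 + s^6 * w^3"
    unfolding log_gap_d4_num_def s(2) w(2) by algebra
  also have "\<dots> \<ge> 0" using s w by (intro add_nonneg_nonneg mult_nonneg_nonneg zero_le_power) auto
  finally show ?thesis .
qed

context
  fixes v x :: real
  assumes x: "1 \<le> x" and v: "1 \<le> v"
begin

private lemma pos: "0 < 1 + v * x" "0 < x + v" "0 < x" "0 < 1 + v"
  using x v by (auto intro: add_pos_nonneg)

lemma log_gap_deriv: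
  "(log_gap v has_real_derivative log_gap_d1 v x / (x * ((1 + v * x) * (x + v)))) (at x)"
  unfolding log_gap_def[abs_def]
  apply (intro derivative_eq_intros)
  apply (use pos in auto)
  using pos unfolding log_gap_d1_def
  apply (simp add: divide_simps)
  apply (simp add: algebra_simps power2_eq_square)
  done

lemma log_gap_d1_deriv: "(log_gap_d1 v has_real_derivative log_gap_d2 v x) (at x)"
  unfolding log_gap_d1_def[abs_def]
  apply (intro derivative_eq_intros)
  apply (use pos in auto)
  using pos unfolding log_gap_d2_def
  apply (simp add: divide_simps)
  apply algebra
  done

lemma log_gap_d2_deriv: "(log_gap_d2 v has_real_derivative log_gap_d3 v x) (at x)"
  unfolding log_gap_d2_def[abs_def]
  apply (intro derivative_eq_intros)
  apply (use pos in auto)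
  using pos unfolding log_gap_d3_def
  apply (simp add: divide_simps)
  apply algebra
  done

lemma log_gap_d3_deriv:
  "(log_gap_d3 v has_real_derivative
     (v^2 - 1) * log_gap_d4_num v x / (x^2 * ((1 + v * x) * (x + v))^3)) (at x)"
  unfolding log_gap_d3_def[abs_def]
  apply (intro derivative_eq_intros)
  apply (use pos in auto)
  using pos unfolding log_gap_d4_num_def
  apply (simp add: divide_simps)
  apply algebra
  done

end

lemma log_gap_nonneg:
  assumes x: "1 \<le> x" and v: "1 \<le> v"
  shows "0 \<le> log_gap v x"
proof -
  have R_pos: "0 < (1 + v * y) * (y + v)" if "1 \<le> y" for y
    using that v by (intro mult_pos_pos) (auto intro: add_pos_nonneg)
  have v2: "0 \<le> v^2 - 1" using v by (simp add: one_le_power)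
  have d3: "0 \<le> log_gap_d3 v y" if "1 \<le> y" for y
  proof (rule nonneg_if_deriv_nonneg_from[OF _ log_gap_d3_deriv[OF _ v] _ that])
    show "log_gap_d3 v 1 = 0"
      using v unfolding log_gap_d3_def by (simp add: divide_simps) algebra
  qed (use R_pos v2 log_gap_d4_num_nonneg v in auto)
  have d2: "0 \<le> log_gap_d2 v y" if "1 \<le> y" for y
  proof (rule nonneg_if_deriv_nonneg_from[OF _ log_gap_d2_deriv[OF _ v] d3 that])
    show "log_gap_d2 v 1 = 0"
      using v unfolding log_gap_d2_def by (simp add: divide_simps) algebra
  qed
  have d1: "0 \<le> log_gap_d1 v y" if "1 \<le> y" for y
    by (rule nonneg_if_deriv_nonneg_from[OF _ log_gap_d1_deriv[OF _ v] d2 that])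
      (simp add: log_gap_d1_def)
  show ?thesis
    by (rule nonneg_if_deriv_nonneg_from[OF _ log_gap_deriv[OF _ v] _ x])
      (use d1 R_pos in \<open>auto simp: log_gap_def intro!: divide_nonneg_pos\<close>)
qed

lemma exp_mult_le_pade:
  fixes z :: real
  assumes "0 \<le> z"
  shows "exp z * (2 - z) \<le> 2 + z"
proof -
  have "0 \<le> 2 + z - exp z * (2 - z)"
  proof (rule nonneg_if_deriv_nonneg_from[OF _ _ _ assms])
    fix y :: real
    show "((\<lambda>z. 2 + z - exp z * (2 - z)) has_real_derivative 1 - exp y * (1 - y)) (at y)"
      by (auto intro!: derivative_eq_intros simp: algebra_simps)
    have "exp y * (1 - y) \<le> exp y * exp (- y)"
      using exp_ge_add_one_self[of "- y"] by (intro mult_left_mono) auto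
    then show "0 \<le> 1 - exp y * (1 - y)" by (simp add: exp_minus)
  qed simp
  then show ?thesis by simp
qed

lemma mult_exp_le_of_gap:
  fixes A B D \<beta> c :: real
  assumes A: "0 \<le> A" and B: "0 \<le> B" and D: "0 \<le> D" and BA: "B \<le> A"
    and \<beta>: "0 < \<beta>" and c: "0 \<le> c" "\<beta> * c \<le> 1" and gap: "D * (A + B) \<le> 2 * c * (A - B)"
  shows "B * exp (\<beta> * D) \<le> A"
proof (cases "c = 0")
  case True
  then have "D * (A + B) = 0" using gap A B D by (intro order_antisym) auto
  then have "D = 0 \<or> B = 0" using A B by auto
  then show ?thesis using BA A by auto
next
  case False
  define z where "z = \<beta> * D"
  have z0: "0 \<le> z" unfolding z_def using \<beta> D by simp
  have "z * c \<le> D" unfolding z_def using mult_left_mono[OF c(2) D] by (simp add: mult_ac)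
  then have "z * c * (A + B) \<le> D * (A + B)" using A B by (intro mult_right_mono) auto
  also have "\<dots> \<le> 2 * (A - B) * c" using gap by (simp only: mult_ac)
  finally have "(z * (A + B)) * c \<le> (2 * (A - B)) * c" by (simp add: mult_ac)
  then have "z * (A + B) \<le> 2 * (A - B)" using c False by (auto elim: mult_right_le_imp_le)
  then have Bz: "B * (2 + z) \<le> A * (2 - z)" by (simp add: algebra_simps)
  show ?thesis
  proof (cases "z < 2")
    case True
    have "B * exp z * (2 - z) \<le> B * (2 + z)"
      using exp_mult_le_pade[OF z0] B by (simp add: mult_left_mono mult.assoc)
    with Bz have "B * exp z * (2 - z) \<le> A * (2 - z)" by linarith
    with True show ?thesis unfolding z_def by (auto intro: mult_right_le_imp_le)
  next
    case False
    then have "A * (2 - z) \<le> 0" using A by (simp add: mult_nonneg_nonpos)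
    with Bz have "B * (2 + z) \<le> 0" by linarith
    then have "B = 0" using B z0 by (auto simp: mult_le_0_iff)
    then show ?thesis using A by simp
  qed
qed

lemma ln_ratio_weighted_le:
  fixes \<beta> v x :: real
  assumes \<beta>: "0 < \<beta>" and v: "1 \<le> v" and \<beta>v: "\<beta> * (v - 1) \<le> 1" and x: "1 \<le> x"
  shows "(x + v) powr (- \<beta>) * (ln (1 + v) + ln x - ln (x + v))
           \<le> (1 + v * x) powr (- \<beta>) * (ln (1 + v * x) - ln (1 + v))"
proof -
  define A where "A = ln (1 + v * x) - ln (1 + v)"
  define B where "B = ln (1 + v) + ln x - ln (x + v)"
  define D where "D = ln (1 + v * x) - ln (x + v)"
  have pos: "0 < 1 + v * x" "0 < x + v" "0 < x" "0 < 1 + v"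
    using v x by (auto intro: add_pos_nonneg)
  have "1 + v \<le> 1 + v * x" using v x by (simp add: mult_left_mono)
  then have A0: "0 \<le> A" unfolding A_def using pos by simp
  have "x + v \<le> (1 + v) * x" using v x by (simp add: algebra_simps)
  then have "ln (x + v) \<le> ln ((1 + v) * x)" using pos by simp
  then have B0: "0 \<le> B" unfolding B_def using pos by (simp add: ln_mult)
  have "0 \<le> (v - 1) * (x - 1)" using v x by simp
  then have "x + v \<le> 1 + v * x" by (simp add: algebra_simps)
  then have D0: "0 \<le> D" unfolding D_def using pos by simp
  have "(1 + v * x) * (x + v) - (1 + v)^2 * x = v * (x - 1)^2"
    by (simp add: algebra_simps power2_eq_square)
  moreover have "0 \<le> v * (x - 1)^2" using v by simp
  ultimately have "(1 + v)^2 * x \<le> (1 + v * x) * (x + v)" by linarith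
  then have "ln ((1 + v)^2 * x) \<le> ln ((1 + v * x) * (x + v))" using pos by simp
  then have BA: "B \<le> A" unfolding A_def B_def using pos by (simp add: ln_mult ln_realpow)
  have "D * (A + B) \<le> 2 * (v - 1) * (A - B)"
    using log_gap_nonneg[OF x v] unfolding log_gap_def A_def B_def D_def by (simp add: algebra_simps)
  then have "B * exp (\<beta> * D) \<le> A" using v \<beta>v by (intro mult_exp_le_of_gap[OF A0 B0 D0 BA \<beta>]) auto
  then have "(1 + v * x) powr (- \<beta>) * (B * exp (\<beta> * D)) \<le> (1 + v * x) powr (- \<beta>) * A"
    by (rule mult_left_mono) simp
  moreover have "(x + v) powr (- \<beta>) = (1 + v * x) powr (- \<beta>) * exp (\<beta> * D)"
    unfolding D_def using pos by (simp add: powr_def exp_add[symmetric] algebra_simps)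
  ultimately show ?thesis unfolding A_def[symmetric] B_def[symmetric] by (simp add: mult_ac)
qed

lemma weighted_ln_rates_ge:
  fixes \<beta> v t1 t2 :: real
  assumes \<beta>: "0 < \<beta>" and v: "1 \<le> v" and \<beta>v: "\<beta> * (v - 1) \<le> 1" and t: "0 < t1" "0 < t2"
  shows "((1/t1 + v/t2) powr (- \<beta>) + (v/t1 + 1/t2) powr (- \<beta>)) * ln (1 + v)
     \<le> (1/t1 + v/t2) powr (- \<beta>) * ln ((1/t1 + v/t2) * t1) + (v/t1 + 1/t2) powr (- \<beta>) * ln ((v/t1 + 1/t2) * t2)"
    (is "?L t1 t2 \<le> ?R t1 t2")
proof -
  have ordered: "?L t1 t2 \<le> ?R t1 t2" if le: "t2 \<le> t1" and t: "0 < t1" "0 < t2" for t1 t2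
  proof -
    define x where "x = t1 / t2"
    have x: "1 \<le> x" unfolding x_def using le t by simp
    have pos: "0 < 1 + v * x" "0 < x + v" "0 < x" using v x by (auto intro: add_pos_nonneg)
    have b1: "1/t1 + v/t2 = (1 + v * x) / t1" and b2: "v/t1 + 1/t2 = (x + v) / t1"
      unfolding x_def using t by (simp_all add: field_simps)
    have "(x + v) / t1 * t2 = (x + v) / x" unfolding x_def using t by simp
    then have ln2: "ln ((v/t1 + 1/t2) * t2) = ln (x + v) - ln x"
      unfolding b2 using pos by (simp add: ln_div)
    have "((1 + v * x) powr (- \<beta>) + (x + v) powr (- \<beta>)) * ln (1 + v)
       \<le> (1 + v * x) powr (- \<beta>) * ln (1 + v * x) + (x + v) powr (- \<beta>) * (ln (x + v) - ln x)"
      using ln_ratio_weighted_le[OF \<beta> v \<beta>v x] by (simp add: algebra_simps)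
    then have "((1 + v * x) powr (- \<beta>) + (x + v) powr (- \<beta>)) * ln (1 + v) * t1 powr \<beta>
       \<le> ((1 + v * x) powr (- \<beta>) * ln (1 + v * x) + (x + v) powr (- \<beta>) * (ln (x + v) - ln x)) * t1 powr \<beta>"
      by (rule mult_right_mono) simp
    moreover have powr_div: "(y / t1) powr (- \<beta>) = y powr (- \<beta>) * t1 powr \<beta>" if "0 < y" for y
    proof -
      have "(y / t1) powr (- \<beta>) = y powr (- \<beta>) / t1 powr (- \<beta>)" using that t by (simp add: powr_divide)
      then show ?thesis by (simp add: powr_minus divide_inverse)
    qed
    moreover have ln1: "ln ((1/t1 + v/t2) * t1) = ln (1 + v * x)" unfolding b1 using t by simp
    ultimately show ?thesis
      unfolding ln1 ln2 unfolding b1 b2 powr_div[OF pos(1)] powr_div[OF pos(2)]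
      by (simp add: algebra_simps)
  qed
  show ?thesis
  proof (cases "t2 \<le> t1")
    case False
    then have "?L t2 t1 \<le> ?R t2 t1" using t by (intro ordered) auto
    then show ?thesis by (simp only: ac_simps)
  qed (use ordered t in auto)
qed

definition gamma_ln_kernel :: "real \<Rightarrow> real \<Rightarrow> nat \<Rightarrow> real \<Rightarrow> real" where
  "gamma_ln_kernel \<beta> b k s = indicator {0<..} s * s powr (\<beta> - 1) * exp (- (b * s)) * (ln s)^k"

lemma gamma_ln_kernel_measurable [measurable]: "gamma_ln_kernel \<beta> b k \<in> borel_measurable borel"
  unfolding gamma_ln_kernel_def[abs_def] by measurable

lemma gamma_ln_kernel_0_nonneg: "0 \<le> gamma_ln_kernel \<beta> b 0 s"
  unfolding gamma_ln_kernel_def by (simp add: indicator_def)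

lemma gamma_ln_kernel_scale:
  assumes "0 < b"
  shows "gamma_ln_kernel \<beta> 1 0 (b * s) = b powr (\<beta> - 1) * gamma_ln_kernel \<beta> b 0 s"
    and "gamma_ln_kernel \<beta> 1 1 (b * s)
           = b powr (\<beta> - 1) * (ln b * gamma_ln_kernel \<beta> b 0 s + gamma_ln_kernel \<beta> b 1 s)"
  using assms by (cases "0 < s";
      simp add: gamma_ln_kernel_def powr_mult ln_mult algebra_simps zero_less_mult_iff)+

lemma has_bochner_integral_gamma_ln_kernel_unit:
  assumes "0 < \<beta>"
  shows "has_bochner_integral lborel (gamma_ln_kernel \<beta> 1 0) (Gamma \<beta>)"
proof (rule has_bochner_integral_nn_integral)
  have "gamma_ln_kernel \<beta> 1 0 t = indicator {0..} t * t powr (\<beta> - 1) / exp t" for t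
    by (cases "0 < t") (auto simp: gamma_ln_kernel_def indicator_def exp_minus field_simps)
  then show "(\<integral>\<^sup>+t. ennreal (gamma_ln_kernel \<beta> 1 0 t) \<partial>lborel) = ennreal (Gamma \<beta>)"
    using Gamma_conv_nn_integral_real[OF assms] by simp
qed (use assms gamma_ln_kernel_0_nonneg in auto)

lemma
  assumes "0 < \<beta>" "0 < b"
  shows integrable_gamma_ln_kernel_0: "integrable lborel (gamma_ln_kernel \<beta> b 0)"
    and integral_gamma_ln_kernel_0: "integral\<^sup>L lborel (gamma_ln_kernel \<beta> b 0) = Gamma \<beta> / b powr \<beta>"
proof -
  note unit = has_bochner_integral_gamma_ln_kernel_unit[OF assms(1)]
  have "integrable lborel (\<lambda>s. gamma_ln_kernel \<beta> 1 0 (0 + b * s))"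
    using integrable.intros[OF unit] assms(2) by (intro lborel_integrable_real_affine) auto
  then show int: "integrable lborel (gamma_ln_kernel \<beta> b 0)"
    using assms(2) by (simp add: gamma_ln_kernel_scale)
  have "Gamma \<beta> = b *\<^sub>R integral\<^sup>L lborel (\<lambda>s. gamma_ln_kernel \<beta> 1 0 (0 + b * s))"
    using lborel_integral_real_affine[of b "gamma_ln_kernel \<beta> 1 0" 0] unit assms(2)
    by (simp add: has_bochner_integral_integral_eq)
  also have "\<dots> = b powr \<beta> * integral\<^sup>L lborel (gamma_ln_kernel \<beta> b 0)"
    using assms(2) by (simp add: gamma_ln_kernel_scale powr_mult_base)
  finally show "integral\<^sup>L lborel (gamma_ln_kernel \<beta> b 0) = Gamma \<beta> / b powr \<beta>"
    using assms(2) by (simp add: field_simps)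
qed

lemma powr_ln_sq_le:
  fixes s \<beta> :: real
  assumes \<beta>: "0 < \<beta>" and s: "0 < s"
  shows "s powr (\<beta> - 1) * (ln s)^2 \<le> 16 / \<beta>^2 * s powr (\<beta> / 2 - 1) + s powr (\<beta> + 2 - 1)"
proof (cases "s \<le> 1")
  case True
  define y where "y = s powr (- \<beta> / 4)"
  have y0: "0 < y" unfolding y_def using s by simp
  have "ln y = - (\<beta> / 4) * ln s" unfolding y_def using s by (simp add: ln_powr)
  moreover have "ln y \<le> y" using ln_le_minus_one[OF y0] by simp
  moreover have "ln s \<le> 0" using True s by simp
  ultimately have "0 \<le> \<beta> / 4 * (- ln s)" "\<beta> / 4 * (- ln s) \<le> y"
    using \<beta> by (auto simp: mult_nonneg_nonpos)
  then have "(\<beta> / 4 * (- ln s))^2 \<le> y^2" by (intro power_mono) auto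
  also have "y^2 = s powr (- \<beta> / 2)"
    unfolding y_def using s by (simp add: powr_powr[symmetric] power2_eq_square powr_add[symmetric])
  finally have "(ln s)^2 \<le> 16 / \<beta>^2 * s powr (- \<beta> / 2)"
    using \<beta> by (simp add: field_simps power2_eq_square)
  then have "s powr (\<beta> - 1) * (ln s)^2 \<le> s powr (\<beta> - 1) * (16 / \<beta>^2 * s powr (- \<beta> / 2))"
    by (intro mult_left_mono) auto
  also have "\<dots> = 16 / \<beta>^2 * s powr (\<beta> / 2 - 1)"
    using s by (simp add: powr_add[symmetric] field_simps)
  finally show ?thesis using powr_ge_zero[of s "\<beta> + 2 - 1"] by linarith
next
  case False
  then have "0 \<le> ln s" "ln s \<le> s" using ln_le_minus_one[OF s] by auto
  then have "(ln s)^2 \<le> s powr 2" using s by (simp add: power_mono powr_realpow)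
  then have "s powr (\<beta> - 1) * (ln s)^2 \<le> s powr (\<beta> - 1) * s powr 2" by (intro mult_left_mono) auto
  also have "\<dots> = s powr (\<beta> + 2 - 1)" by (simp add: powr_add[symmetric])
  moreover have "0 \<le> 16 / \<beta>^2 * s powr (\<beta> / 2 - 1)" by simp
  ultimately show ?thesis by linarith
qed

lemma gamma_ln_kernel_2_le:
  assumes "0 < \<beta>"
  shows "norm (gamma_ln_kernel \<beta> b 2 s)
           \<le> norm (16 / \<beta>^2 * gamma_ln_kernel (\<beta> / 2) b 0 s + gamma_ln_kernel (\<beta> + 2) b 0 s)"
proof (cases "0 < s")
  case True
  have "gamma_ln_kernel \<beta> b 2 s = exp (- (b * s)) * (s powr (\<beta> - 1) * (ln s)^2)"
    unfolding gamma_ln_kernel_def using True by simp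
  also have "\<dots> \<le> exp (- (b * s)) * (16 / \<beta>^2 * s powr (\<beta> / 2 - 1) + s powr (\<beta> + 2 - 1))"
    by (intro mult_left_mono powr_ln_sq_le assms True) simp
  also have "\<dots> = 16 / \<beta>^2 * gamma_ln_kernel (\<beta> / 2) b 0 s + gamma_ln_kernel (\<beta> + 2) b 0 s"
    unfolding gamma_ln_kernel_def using True by (simp add: algebra_simps)
  finally show ?thesis using True unfolding gamma_ln_kernel_def by simp
qed (simp add: gamma_ln_kernel_def)

lemma gamma_ln_kernel_1_le:
  "norm (gamma_ln_kernel \<beta> b 1 s) \<le> norm (gamma_ln_kernel \<beta> b 0 s + gamma_ln_kernel \<beta> b 2 s)"
proof -
  have "\<bar>ln s\<bar> \<le> 1 + (ln s)^2"
  proof (cases "\<bar>ln s\<bar> \<le> 1")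
    case False
    then have "\<bar>ln s\<bar> * 1 \<le> \<bar>ln s\<bar> * \<bar>ln s\<bar>" by (intro mult_left_mono) auto
    then show ?thesis by (simp add: power2_eq_square)
  qed (use zero_le_power2[of "ln s"] in linarith)
  have "\<bar>gamma_ln_kernel \<beta> b 1 s\<bar> = gamma_ln_kernel \<beta> b 0 s * \<bar>ln s\<bar>"
    unfolding gamma_ln_kernel_def by (simp add: abs_mult indicator_def)
  also have "\<dots> \<le> gamma_ln_kernel \<beta> b 0 s * (1 + (ln s)^2)"
    by (intro mult_left_mono gamma_ln_kernel_0_nonneg) fact
  also have "\<dots> = gamma_ln_kernel \<beta> b 0 s + gamma_ln_kernel \<beta> b 2 s"
    unfolding gamma_ln_kernel_def by (simp add: algebra_simps)
  finally show ?thesis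
    using gamma_ln_kernel_0_nonneg[of \<beta> b s] by (simp add: gamma_ln_kernel_def indicator_def)
qed

lemma integrable_gamma_ln_kernel_2:
  assumes "0 < \<beta>" "0 < b"
  shows "integrable lborel (gamma_ln_kernel \<beta> b 2)"
proof (rule Bochner_Integration.integrable_bound[OF _ _ AE_I2[OF gamma_ln_kernel_2_le[OF assms(1)]]])
  show "integrable lborel (\<lambda>s. 16 / \<beta>^2 * gamma_ln_kernel (\<beta> / 2) b 0 s + gamma_ln_kernel (\<beta> + 2) b 0 s)"
    using integrable_gamma_ln_kernel_0[of "\<beta> / 2" b] integrable_gamma_ln_kernel_0[of "\<beta> + 2" b] assms
    by auto
qed simp

lemma integrable_gamma_ln_kernel_1:
  assumes "0 < \<beta>" "0 < b"
  shows "integrable lborel (gamma_ln_kernel \<beta> b 1)"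
  using integrable_gamma_ln_kernel_0[OF assms] integrable_gamma_ln_kernel_2[OF assms]
  by (intro Bochner_Integration.integrable_bound[OF _ _ AE_I2[OF gamma_ln_kernel_1_le]]) auto

lemma integral_gamma_ln_kernel_1_unit:
  assumes \<beta>: "0 < \<beta>"
  shows "integral\<^sup>L lborel (gamma_ln_kernel \<beta> 1 1) = Gamma \<beta> * Digamma \<beta>"
proof -
  define M where "M = integral\<^sup>L lborel (gamma_ln_kernel \<beta> 1 1)"
  \<comment> \<open>Since \<open>s powr h \<ge> 1 + h * ln s\<close>, the function \<open>h \<mapsto> Gamma (\<beta> + h) - h * M\<close> is minimal at \<open>h = 0\<close>,
    so its derivative \<open>Gamma \<beta> * Digamma \<beta> - M\<close> vanishes there.\<close>
  have min: "Gamma \<beta> + h * M \<le> Gamma (\<beta> + h)" if h: "\<bar>0 - h\<bar> < \<beta>" for h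
  proof -
    have \<beta>h: "0 < \<beta> + h" using h by simp
    have "integral\<^sup>L lborel (\<lambda>s. gamma_ln_kernel \<beta> 1 0 s + h * gamma_ln_kernel \<beta> 1 1 s)
        \<le> integral\<^sup>L lborel (gamma_ln_kernel (\<beta> + h) 1 0)"
    proof (rule integral_mono)
      show "integrable lborel (\<lambda>s. gamma_ln_kernel \<beta> 1 0 s + h * gamma_ln_kernel \<beta> 1 1 s)"
        using integrable_gamma_ln_kernel_0[OF \<beta>, of 1] integrable_gamma_ln_kernel_1[OF \<beta>, of 1] by auto
      show "integrable lborel (gamma_ln_kernel (\<beta> + h) 1 0)"
        using integrable_gamma_ln_kernel_0[OF \<beta>h, of 1] by simp
      fix s :: real
      show "gamma_ln_kernel \<beta> 1 0 s + h * gamma_ln_kernel \<beta> 1 1 s \<le> gamma_ln_kernel (\<beta> + h) 1 0 s"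
      proof (cases "0 < s")
        case True
        have "1 + h * ln s \<le> s powr h"
          using exp_ge_add_one_self[of "h * ln s"] True by (simp add: powr_def)
        then have "s powr (\<beta> - 1) * exp (- s) * (1 + h * ln s) \<le> s powr (\<beta> - 1) * exp (- s) * s powr h"
          by (intro mult_left_mono) auto
        also have "\<dots> = s powr (\<beta> + h - 1) * exp (- s)"
          using True by (simp add: powr_add[symmetric] algebra_simps)
        finally show ?thesis using True unfolding gamma_ln_kernel_def by (simp add: algebra_simps)
      qed (simp add: gamma_ln_kernel_def)
    qed
    then show ?thesis
      using integral_gamma_ln_kernel_0[OF \<beta>, of 1] integral_gamma_ln_kernel_0[OF \<beta>h, of 1]
        integrable_gamma_ln_kernel_0[OF \<beta>, of 1] integrable_gamma_ln_kernel_1[OF \<beta>, of 1]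
      unfolding M_def by simp
  qed
  have "\<beta> + 0 \<notin> \<int>\<^sub>\<le>\<^sub>0" using \<beta> nonpos_Ints_nonpos by fastforce
  then have "((\<lambda>h. Gamma (\<beta> + h) - h * M) has_real_derivative Gamma \<beta> * Digamma \<beta> - M) (at 0)"
    by (auto intro!: derivative_eq_intros)
  from DERIV_local_min[OF this \<beta>] min have "Gamma \<beta> * Digamma \<beta> - M = 0" by force
  then show ?thesis unfolding M_def by simp
qed

lemma integral_gamma_ln_kernel_1:
  assumes \<beta>: "0 < \<beta>" and b: "0 < b"
  shows "integral\<^sup>L lborel (gamma_ln_kernel \<beta> b 1) = Gamma \<beta> / b powr \<beta> * (Digamma \<beta> - ln b)"
proof -
  have "Gamma \<beta> * Digamma \<beta> = b * integral\<^sup>L lborel (\<lambda>s. gamma_ln_kernel \<beta> 1 1 (0 + b * s))"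
    using integral_gamma_ln_kernel_1_unit[OF \<beta>] lborel_integral_real_affine[of b "gamma_ln_kernel \<beta> 1 1" 0] b
    by simp
  also have "(\<lambda>s. gamma_ln_kernel \<beta> 1 1 (0 + b * s))
      = (\<lambda>s. b powr (\<beta> - 1) * (ln b * gamma_ln_kernel \<beta> b 0 s + gamma_ln_kernel \<beta> b 1 s))"
    using gamma_ln_kernel_scale(2)[OF b] by simp
  also have "b * integral\<^sup>L lborel \<dots>
      = b * b powr (\<beta> - 1) * (ln b * (Gamma \<beta> / b powr \<beta>) + integral\<^sup>L lborel (gamma_ln_kernel \<beta> b 1))"
    using integrable_gamma_ln_kernel_0[OF \<beta> b] integrable_gamma_ln_kernel_1[OF \<beta> b]
      integral_gamma_ln_kernel_0[OF \<beta> b]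
    by simp
  also have "b * b powr (\<beta> - 1) = b powr \<beta>" using b by (simp add: powr_mult_base)
  finally have "Gamma \<beta> * Digamma \<beta> = ln b * Gamma \<beta> + b powr \<beta> * integral\<^sup>L lborel (gamma_ln_kernel \<beta> b 1)"
    using b by (simp add: distrib_left)
  then show ?thesis using b by (simp add: field_simps)
qed

definition gamma_ln_sq_dev :: "real \<Rightarrow> real \<Rightarrow> real \<Rightarrow> real" where
  "gamma_ln_sq_dev \<beta> b e = integral\<^sup>L lborel (\<lambda>s. gamma_ln_kernel \<beta> b 0 s * (ln s - e)^2)"

lemma gamma_ln_sq_dev_expand:
  "gamma_ln_kernel \<beta> b 0 s * (ln s - e)^2
     = gamma_ln_kernel \<beta> b 2 s - 2 * e * gamma_ln_kernel \<beta> b 1 s + e^2 * gamma_ln_kernel \<beta> b 0 s"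
  by (simp add: gamma_ln_kernel_def power2_eq_square algebra_simps)

lemma integrable_gamma_ln_sq_dev:
  assumes "0 < \<beta>" "0 < b"
  shows "integrable lborel (\<lambda>s. gamma_ln_kernel \<beta> b 0 s * (ln s - e)^2)"
  using integrable_gamma_ln_kernel_0[OF assms] integrable_gamma_ln_kernel_1[OF assms]
    integrable_gamma_ln_kernel_2[OF assms]
  unfolding gamma_ln_sq_dev_expand by auto

lemma gamma_ln_sq_dev_nonneg: "0 \<le> gamma_ln_sq_dev \<beta> b e"
  unfolding gamma_ln_sq_dev_def by (intro integral_nonneg_AE AE_I2 mult_nonneg_nonneg gamma_ln_kernel_0_nonneg) auto

lemma gamma_ln_sq_dev_diff:
  assumes "0 < \<beta>" "0 < b"
  shows "gamma_ln_sq_dev \<beta> b c - gamma_ln_sq_dev \<beta> b d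
           = Gamma \<beta> * b powr (- \<beta>) * (c - d) * (c + d - 2 * (Digamma \<beta> - ln b))"
proof -
  have dev: "gamma_ln_sq_dev \<beta> b e = integral\<^sup>L lborel (gamma_ln_kernel \<beta> b 2)
          - 2 * e * (Gamma \<beta> / b powr \<beta> * (Digamma \<beta> - ln b)) + e^2 * (Gamma \<beta> / b powr \<beta>)" for e
    using integrable_gamma_ln_kernel_0[OF assms] integrable_gamma_ln_kernel_1[OF assms]
      integrable_gamma_ln_kernel_2[OF assms] integral_gamma_ln_kernel_1[OF assms]
    unfolding gamma_ln_sq_dev_def gamma_ln_sq_dev_expand
    by (simp add: integral_gamma_ln_kernel_0[OF assms])
  show ?thesis unfolding dev using assms(2) by (simp add: powr_minus field_simps power2_eq_square)
qed

lemma pred_in_greaterThan [measurable (raw)]: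
  fixes f g :: "'a \<Rightarrow> real"
  shows "f \<in> borel_measurable M \<Longrightarrow> g \<in> borel_measurable M \<Longrightarrow> Measurable.pred M (\<lambda>x. g x \<in> {f x<..})"
  by simp

lemma pred_in_lessThan [measurable (raw)]:
  fixes f g :: "'a \<Rightarrow> real"
  shows "f \<in> borel_measurable M \<Longrightarrow> g \<in> borel_measurable M \<Longrightarrow> Measurable.pred M (\<lambda>x. g x \<in> {..<f x})"
  by simp

lemma nn_integral_above_diagonal_ratio:
  fixes G :: "real \<times> real \<Rightarrow> ennreal"
  assumes G[measurable]: "G \<in> borel_measurable (lborel \<Otimes>\<^sub>M lborel)"
    and zero: "\<And>a y. a \<le> 0 \<Longrightarrow> G (a, y) = 0"
  shows "(\<integral>\<^sup>+a. \<integral>\<^sup>+y. G (a, y) * indicator {a<..} y \<partial>lborel \<partial>lborel)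
       = (\<integral>\<^sup>+v. \<integral>\<^sup>+a. ennreal a * indicator {1<..} v * G (a, a * v) \<partial>lborel \<partial>lborel)"
proof -
  have inner: "(\<integral>\<^sup>+y. G (a, y) * indicator {a<..} y \<partial>lborel)
      = (\<integral>\<^sup>+v. ennreal a * indicator {1<..} v * G (a, a * v) \<partial>lborel)" for a
  proof (cases "0 < a")
    case True
    have "(\<integral>\<^sup>+y. G (a, y) * indicator {a<..} y \<partial>lborel)
        = ennreal \<bar>a\<bar> * (\<integral>\<^sup>+v. G (a, 0 + a * v) * indicator {a<..} (0 + a * v) \<partial>lborel)"
      by (rule nn_integral_real_affine) (use True in auto)
    also have "\<dots> = (\<integral>\<^sup>+v. ennreal a * (indicator {1<..} v * G (a, a * v)) \<partial>lborel)"
      using True by (subst nn_integral_cmult) (auto intro!: nn_integral_cong simp: indicator_def mult.commute)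
    finally show ?thesis by (simp add: mult.assoc)
  qed (use zero in \<open>simp add: ennreal_neg\<close>)
  show ?thesis
    unfolding inner by (rule lborel_pair.Fubini'[symmetric]) measurable
qed

lemma nn_integral_lborel_pair_min_ratio:
  fixes F :: "real \<times> real \<Rightarrow> ennreal"
  assumes F[measurable]: "F \<in> borel_measurable (lborel \<Otimes>\<^sub>M lborel)"
    and zero: "\<And>x1 x2. \<not> (0 < x1 \<and> 0 < x2) \<Longrightarrow> F (x1, x2) = 0"
  shows "(\<integral>\<^sup>+x. F x \<partial>(lborel \<Otimes>\<^sub>M lborel))
     = (\<integral>\<^sup>+v. \<integral>\<^sup>+s. ennreal s * indicator {1<..} v * (F (s, s * v) + F (s * v, s)) \<partial>lborel \<partial>lborel)"
proof -
  have "(\<integral>\<^sup>+x. F x \<partial>(lborel \<Otimes>\<^sub>M lborel)) = (\<integral>\<^sup>+x1. \<integral>\<^sup>+x2. F (x1, x2) \<partial>lborel \<partial>lborel)"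
    by (rule lborel.nn_integral_fst[symmetric]) measurable
  also have "\<dots> = (\<integral>\<^sup>+x1. (\<integral>\<^sup>+x2. F (x1, x2) * indicator {x1<..} x2 \<partial>lborel)
                      + (\<integral>\<^sup>+x2. F (x1, x2) * indicator {..<x1} x2 \<partial>lborel) \<partial>lborel)"
  proof (intro nn_integral_cong)
    fix x1 :: real
    have "(\<integral>\<^sup>+x2. F (x1, x2) \<partial>lborel)
        = (\<integral>\<^sup>+x2. F (x1, x2) * indicator {x1<..} x2 + F (x1, x2) * indicator {..<x1} x2 \<partial>lborel)"
      by (intro nn_integral_cong_AE eventually_mono[OF AE_lborel_singleton[of x1]]) (auto simp: indicator_def)
    also have "\<dots> = (\<integral>\<^sup>+x2. F (x1, x2) * indicator {x1<..} x2 \<partial>lborel)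
                    + (\<integral>\<^sup>+x2. F (x1, x2) * indicator {..<x1} x2 \<partial>lborel)"
      by (rule nn_integral_add) measurable
    finally show "(\<integral>\<^sup>+x2. F (x1, x2) \<partial>lborel) = \<dots>" .
  qed
  also have "\<dots> = (\<integral>\<^sup>+x1. \<integral>\<^sup>+x2. F (x1, x2) * indicator {x1<..} x2 \<partial>lborel \<partial>lborel)
                  + (\<integral>\<^sup>+x1. \<integral>\<^sup>+x2. F (x1, x2) * indicator {..<x1} x2 \<partial>lborel \<partial>lborel)"
    by (rule nn_integral_add) measurable
  also have "(\<integral>\<^sup>+x1. \<integral>\<^sup>+x2. F (x1, x2) * indicator {x1<..} x2 \<partial>lborel \<partial>lborel)
      = (\<integral>\<^sup>+v. \<integral>\<^sup>+s. ennreal s * indicator {1<..} v * F (s, s * v) \<partial>lborel \<partial>lborel)"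
    by (rule nn_integral_above_diagonal_ratio[of F]) (use zero in auto)
  also have "(\<integral>\<^sup>+x1. \<integral>\<^sup>+x2. F (x1, x2) * indicator {..<x1} x2 \<partial>lborel \<partial>lborel)
      = (\<integral>\<^sup>+x2. \<integral>\<^sup>+x1. F (x1, x2) * indicator {x2<..} x1 \<partial>lborel \<partial>lborel)"
    by (subst lborel_pair.Fubini') (auto intro!: nn_integral_cong simp: indicator_def)
  also have "\<dots> = (\<integral>\<^sup>+v. \<integral>\<^sup>+s. ennreal s * indicator {1<..} v * F (s * v, s) \<partial>lborel \<partial>lborel)"
    by (rule nn_integral_above_diagonal_ratio[of "\<lambda>(a, y). F (y, a)", simplified]) (use zero in auto)
  also have "(\<integral>\<^sup>+v. \<integral>\<^sup>+s. ennreal s * indicator {1<..} v * F (s, s * v) \<partial>lborel \<partial>lborel)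
      + (\<integral>\<^sup>+v. \<integral>\<^sup>+s. ennreal s * indicator {1<..} v * F (s * v, s) \<partial>lborel \<partial>lborel)
      = (\<integral>\<^sup>+v. \<integral>\<^sup>+s. ennreal s * indicator {1<..} v * (F (s, s * v) + F (s * v, s)) \<partial>lborel \<partial>lborel)"
    by (subst nn_integral_add[symmetric], measurable, intro nn_integral_cong,
        subst nn_integral_add[symmetric]) (auto simp: distrib_left)
  finally show ?thesis .
qed

definition joint_dens :: "real \<Rightarrow> real \<times> real \<Rightarrow> real \<times> real \<Rightarrow> real" where
  "joint_dens \<alpha> \<theta> x = gamma_dens \<alpha> (fst \<theta>) (fst x) * gamma_dens \<alpha> (snd \<theta>) (snd x)"

lemma gamma_dens_measurable [measurable]: "gamma_dens \<alpha> t \<in> borel_measurable borel"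
  unfolding gamma_dens_def[abs_def] by measurable

lemma joint_dens_measurable [measurable]: "joint_dens \<alpha> \<theta> \<in> borel_measurable (lborel \<Otimes>\<^sub>M lborel)"
  unfolding joint_dens_def[abs_def] by measurable

lemma H_M_measurable [measurable]: "H_M \<theta> \<in> borel_measurable (lborel \<Otimes>\<^sub>M lborel)"
  unfolding H_M_def[abs_def] by measurable

lemma V_measurable [measurable]: "V \<in> borel_measurable (lborel \<Otimes>\<^sub>M lborel)"
  unfolding V_def[abs_def] Z1_def[abs_def] Z2_def[abs_def] by measurable

lemma d_phi_measurable [measurable]:
  assumes [measurable]: "\<psi> \<in> borel_measurable borel"
  shows "d_phi \<psi> \<in> borel_measurable (lborel \<Otimes>\<^sub>M lborel)"
  unfolding d_phi_def[abs_def] Z1_def[abs_def] by measurable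

lemma gamma_dens_nonneg: "0 < \<alpha> \<Longrightarrow> 0 < t \<Longrightarrow> 0 \<le> gamma_dens \<alpha> t x"
  unfolding gamma_dens_def by simp

lemma gamma_dens_nonpos_eq_0: "x \<le> 0 \<Longrightarrow> gamma_dens \<alpha> t x = 0"
  unfolding gamma_dens_def by simp

lemma joint_law_eq_density: "joint_law \<alpha> \<theta> = density (lborel \<Otimes>\<^sub>M lborel) (\<lambda>x. ennreal (joint_dens \<alpha> \<theta> x))"
  unfolding joint_law_def joint_dens_def by (simp add: case_prod_beta')

lemma AE_joint_law_pos: "AE x in joint_law \<alpha> \<theta>. 0 < fst x \<and> 0 < snd x"
  unfolding joint_law_eq_density
proof (subst AE_density)
  have "0 < ennreal (joint_dens \<alpha> \<theta> x) \<Longrightarrow> 0 < fst x \<and> 0 < snd x" for x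
    unfolding joint_dens_def by (cases "0 < fst x"; cases "0 < snd x") (auto simp: gamma_dens_nonpos_eq_0)
  then show "AE x in lborel \<Otimes>\<^sub>M lborel. 0 < ennreal (joint_dens \<alpha> \<theta> x) \<longrightarrow> 0 < fst x \<and> 0 < snd x"
    by (intro AE_I2) blast
qed measurable

lemma V_ge_1: "0 < fst x \<Longrightarrow> 0 < snd x \<Longrightarrow> 1 \<le> V x"
  unfolding V_def Z1_def Z2_def by (auto simp: min_def max_def field_simps)

lemma
  assumes "0 < s" "1 < v"
  shows Z1_V_H_M_scaled_snd: "Z1 (s, s * v) = s" "V (s, s * v) = v" "H_M \<theta> (s, s * v) = ln (fst \<theta>)"
    and Z1_V_H_M_scaled_fst: "Z1 (s * v, s) = s" "V (s * v, s) = v" "H_M \<theta> (s * v, s) = ln (snd \<theta>)"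
  using assms unfolding Z1_def V_def Z2_def H_M_def by (auto simp: min_def max_def)

lemma risk_d_phi_cong:
  assumes "\<And>v. 1 \<le> v \<Longrightarrow> \<psi> v = \<psi>' v"
  shows "risk \<alpha> \<theta> (d_phi \<psi>) = risk \<alpha> \<theta> (d_phi \<psi>')"
  unfolding risk_def
proof (rule nn_integral_cong_AE)
  show "AE x in joint_law \<alpha> \<theta>. ennreal ((d_phi \<psi> x - H_M \<theta> x)\<^sup>2) = ennreal ((d_phi \<psi>' x - H_M \<theta> x)\<^sup>2)"
    using AE_joint_law_pos by eventually_elim (simp add: d_phi_def assms V_ge_1)
qed

definition cond_risk :: "real \<Rightarrow> real \<times> real \<Rightarrow> real \<Rightarrow> real \<Rightarrow> ennreal" where
  "cond_risk \<alpha> \<theta> v c = (\<integral>\<^sup>+s. ennreal s * indicator {1<..} v *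
      (ennreal (joint_dens \<alpha> \<theta> (s, s * v) * (ln s - c - ln (fst \<theta>))^2)
       + ennreal (joint_dens \<alpha> \<theta> (s * v, s) * (ln s - c - ln (snd \<theta>))^2)) \<partial>lborel)"

lemma cond_risk_le_1: "v \<le> 1 \<Longrightarrow> cond_risk \<alpha> \<theta> v c = 0"
  unfolding cond_risk_def by simp

lemma cond_risk_measurable [measurable]:
  assumes [measurable]: "\<psi> \<in> borel_measurable borel"
  shows "(\<lambda>v. cond_risk \<alpha> \<theta> v (\<psi> v)) \<in> borel_measurable lborel"
  unfolding cond_risk_def joint_dens_def by measurable

lemma risk_d_phi_eq_cond_risk:
  assumes "0 < \<alpha>" "0 < fst \<theta>" "0 < snd \<theta>" and [measurable]: "\<psi> \<in> borel_measurable borel"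
  shows "risk \<alpha> \<theta> (d_phi \<psi>) = (\<integral>\<^sup>+v. cond_risk \<alpha> \<theta> v (\<psi> v) \<partial>lborel)"
proof -
  define F where "F x = ennreal (joint_dens \<alpha> \<theta> x * (d_phi \<psi> x - H_M \<theta> x)^2)" for x
  have [measurable]: "F \<in> borel_measurable (lborel \<Otimes>\<^sub>M lborel)" unfolding F_def[abs_def] by measurable
  have "risk \<alpha> \<theta> (d_phi \<psi>) = (\<integral>\<^sup>+x. F x \<partial>(lborel \<Otimes>\<^sub>M lborel))"
    unfolding risk_def joint_law_eq_density using assms
    by (subst nn_integral_density) (auto intro!: nn_integral_cong
        simp: F_def joint_dens_def ennreal_mult gamma_dens_nonneg)
  also have "\<dots> = (\<integral>\<^sup>+v. \<integral>\<^sup>+s. ennreal s * indicator {1<..} v * (F (s, s * v) + F (s * v, s)) \<partial>lborel \<partial>lborel)"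
    by (rule nn_integral_lborel_pair_min_ratio) (auto simp: F_def joint_dens_def gamma_dens_nonpos_eq_0)
  also have "\<dots> = (\<integral>\<^sup>+v. cond_risk \<alpha> \<theta> v (\<psi> v) \<partial>lborel)"
    unfolding cond_risk_def
  proof (intro nn_integral_cong)
    fix v s :: real
    show "ennreal s * indicator {1<..} v * (F (s, s * v) + F (s * v, s)) = ennreal s * indicator {1<..} v *
      (ennreal (joint_dens \<alpha> \<theta> (s, s * v) * (ln s - \<psi> v - ln (fst \<theta>))^2)
       + ennreal (joint_dens \<alpha> \<theta> (s * v, s) * (ln s - \<psi> v - ln (snd \<theta>))^2))"
      by (cases "0 < s \<and> 1 < v")
        (auto simp: F_def d_phi_def Z1_V_H_M_scaled_snd Z1_V_H_M_scaled_fst indicator_def ennreal_neg)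
  qed
  finally show ?thesis .
qed

lemma gamma_dens_mult_scaled:
  assumes "0 < v" "0 < t1" "0 < t2"
  shows "s * (gamma_dens \<alpha> t1 s * gamma_dens \<alpha> t2 (s * v))
       = v powr (\<alpha> - 1) / (Gamma \<alpha> * t1 powr \<alpha> * (Gamma \<alpha> * t2 powr \<alpha>))
           * gamma_ln_kernel (2 * \<alpha>) (1 / t1 + v / t2) 0 s"
proof (cases "0 < s")
  case True
  have e: "s * (s powr (\<alpha> - 1) * (s * v) powr (\<alpha> - 1)) = s powr (2 * \<alpha> - 1) * v powr (\<alpha> - 1)"
    using True assms by (simp add: powr_mult powr_mult_base powr_add[symmetric] algebra_simps)
  have x: "exp (- s / t1) * exp (- (s * v) / t2) = exp (- ((1 / t1 + v / t2) * s))"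
    by (simp add: exp_add[symmetric] algebra_simps diff_divide_distrib add_divide_distrib)
  have "s * (gamma_dens \<alpha> t1 s * gamma_dens \<alpha> t2 (s * v))
      = s * (s powr (\<alpha> - 1) * (s * v) powr (\<alpha> - 1)) * (exp (- s / t1) * exp (- (s * v) / t2))
          / (Gamma \<alpha> * t1 powr \<alpha> * (Gamma \<alpha> * t2 powr \<alpha>))"
    using True assms unfolding gamma_dens_def by (simp add: ac_simps)
  also have "\<dots> = v powr (\<alpha> - 1) / (Gamma \<alpha> * t1 powr \<alpha> * (Gamma \<alpha> * t2 powr \<alpha>))
           * gamma_ln_kernel (2 * \<alpha>) (1 / t1 + v / t2) 0 s"
    unfolding e x gamma_ln_kernel_def using True by simp
  finally show ?thesis .
qed (simp add: gamma_dens_def gamma_ln_kernel_def)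

lemma joint_dens_scaled:
  fixes \<alpha> :: real
  assumes "0 < v" "0 < fst \<theta>" "0 < snd \<theta>"
  defines "C \<equiv> v powr (\<alpha> - 1) / (Gamma \<alpha> * fst \<theta> powr \<alpha> * (Gamma \<alpha> * snd \<theta> powr \<alpha>))"
  shows "s * joint_dens \<alpha> \<theta> (s, s * v) = C * gamma_ln_kernel (2 * \<alpha>) (1 / fst \<theta> + v / snd \<theta>) 0 s"
    and "s * joint_dens \<alpha> \<theta> (s * v, s) = C * gamma_ln_kernel (2 * \<alpha>) (v / fst \<theta> + 1 / snd \<theta>) 0 s"
  using gamma_dens_mult_scaled[of v "fst \<theta>" "snd \<theta>" s \<alpha>] gamma_dens_mult_scaled[of v "snd \<theta>" "fst \<theta>" s \<alpha>] assms
  unfolding joint_dens_def by (simp_all add: ac_simps)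

lemma cond_risk_eq_gamma_ln_sq_dev:
  assumes \<alpha>: "0 < \<alpha>" and t: "0 < fst \<theta>" "0 < snd \<theta>" and v: "1 < v"
  obtains C where "0 < C"
    and "\<And>c. cond_risk \<alpha> \<theta> v c
           = ennreal (C * (gamma_ln_sq_dev (2 * \<alpha>) (1 / fst \<theta> + v / snd \<theta>) (c + ln (fst \<theta>))
                           + gamma_ln_sq_dev (2 * \<alpha>) (v / fst \<theta> + 1 / snd \<theta>) (c + ln (snd \<theta>))))"
proof
  define C where "C = v powr (\<alpha> - 1) / (Gamma \<alpha> * fst \<theta> powr \<alpha> * (Gamma \<alpha> * snd \<theta> powr \<alpha>))"
  define b1 where "b1 = 1 / fst \<theta> + v / snd \<theta>"
  define b2 where "b2 = v / fst \<theta> + 1 / snd \<theta>"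
  have b: "0 < b1" "0 < b2" "0 < 2 * \<alpha>" using t v \<alpha> unfolding b1_def b2_def by (auto intro: add_pos_pos)
  show "0 < C" unfolding C_def using \<alpha> t v by simp
  have dens: "s * joint_dens \<alpha> \<theta> (s, s * v) = C * gamma_ln_kernel (2 * \<alpha>) b1 0 s"
    "s * joint_dens \<alpha> \<theta> (s * v, s) = C * gamma_ln_kernel (2 * \<alpha>) b2 0 s" for s
    using joint_dens_scaled[of v \<theta> s \<alpha>] t v unfolding C_def b1_def b2_def by simp_all
  fix c :: real
  define q where "q s = C * (gamma_ln_kernel (2 * \<alpha>) b1 0 s * (ln s - (c + ln (fst \<theta>)))^2
                           + gamma_ln_kernel (2 * \<alpha>) b2 0 s * (ln s - (c + ln (snd \<theta>)))^2)" for s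
  have q_nonneg: "0 \<le> q s" for s
    unfolding q_def using \<open>0 < C\<close> by (intro mult_nonneg_nonneg add_nonneg_nonneg gamma_ln_kernel_0_nonneg) auto
  have "ennreal s * indicator {1<..} v *
      (ennreal (joint_dens \<alpha> \<theta> (s, s * v) * (ln s - c - ln (fst \<theta>))^2)
       + ennreal (joint_dens \<alpha> \<theta> (s * v, s) * (ln s - c - ln (snd \<theta>))^2)) = ennreal (q s)" for s
  proof (cases "0 < s")
    case True
    have "0 \<le> joint_dens \<alpha> \<theta> (s, s * v)" "0 \<le> joint_dens \<alpha> \<theta> (s * v, s)"
      unfolding joint_dens_def using gamma_dens_nonneg \<alpha> t by auto
    then have "ennreal s * indicator {1<..} v *
        (ennreal (joint_dens \<alpha> \<theta> (s, s * v) * (ln s - c - ln (fst \<theta>))^2)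
         + ennreal (joint_dens \<alpha> \<theta> (s * v, s) * (ln s - c - ln (snd \<theta>))^2))
      = ennreal ((s * joint_dens \<alpha> \<theta> (s, s * v)) * (ln s - c - ln (fst \<theta>))^2
                 + (s * joint_dens \<alpha> \<theta> (s * v, s)) * (ln s - c - ln (snd \<theta>))^2)"
      using True v by (simp add: ennreal_mult distrib_left mult.assoc)
    also have "\<dots> = ennreal (q s)" unfolding dens q_def by (simp add: algebra_simps)
    finally show ?thesis .
  qed (auto simp: q_def gamma_ln_kernel_def ennreal_neg)
  then have "cond_risk \<alpha> \<theta> v c = (\<integral>\<^sup>+s. ennreal (q s) \<partial>lborel)"
    unfolding cond_risk_def by simp
  also have "\<dots> = ennreal (integral\<^sup>L lborel q)"
    using integrable_gamma_ln_sq_dev[OF b(3) b(1)] integrable_gamma_ln_sq_dev[OF b(3) b(2)] q_nonneg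
    by (intro nn_integral_eq_integral) (auto simp: q_def)
  also have "integral\<^sup>L lborel q
      = C * (gamma_ln_sq_dev (2 * \<alpha>) b1 (c + ln (fst \<theta>)) + gamma_ln_sq_dev (2 * \<alpha>) b2 (c + ln (snd \<theta>)))"
    using integrable_gamma_ln_sq_dev[OF b(3) b(1)] integrable_gamma_ln_sq_dev[OF b(3) b(2)]
    unfolding q_def gamma_ln_sq_dev_def by simp
  finally show "cond_risk \<alpha> \<theta> v c
      = ennreal (C * (gamma_ln_sq_dev (2 * \<alpha>) (1 / fst \<theta> + v / snd \<theta>) (c + ln (fst \<theta>))
                      + gamma_ln_sq_dev (2 * \<alpha>) (v / fst \<theta> + 1 / snd \<theta>) (c + ln (snd \<theta>))))"
    unfolding b1_def b2_def .
qed

lemma cond_risk_phi_star_less: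
  assumes \<alpha>: "0 < \<alpha>" and t: "0 < fst \<theta>" "0 < snd \<theta>" and v: "1 < v"
    and \<alpha>v: "2 * \<alpha> * (v - 1) \<le> 1" and c: "phi_star \<alpha> v < c"
  shows "cond_risk \<alpha> \<theta> v (phi_star \<alpha> v) < cond_risk \<alpha> \<theta> v c"
proof -
  define b1 where "b1 = 1 / fst \<theta> + v / snd \<theta>"
  define b2 where "b2 = v / fst \<theta> + 1 / snd \<theta>"
  define X1 where "X1 = b1 powr (- (2 * \<alpha>))"
  define X2 where "X2 = b2 powr (- (2 * \<alpha>))"
  define d where "d = c - phi_star \<alpha> v"
  let ?J = "gamma_ln_sq_dev (2 * \<alpha>)" and ?s = "phi_star \<alpha> v"
  let ?K = "X1 * (ln (b1 * fst \<theta>) - ln (1 + v)) + X2 * (ln (b2 * snd \<theta>) - ln (1 + v))"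
  have b: "0 < b1" "0 < b2" "0 < 2 * \<alpha>" using t v \<alpha> unfolding b1_def b2_def by (auto intro: add_pos_pos)
  have K: "0 \<le> ?K"
    using weighted_ln_rates_ge[OF b(3) less_imp_le[OF v] \<alpha>v t]
    unfolding X1_def X2_def b1_def b2_def by (simp add: algebra_simps)
  have "?J b1 (c + ln (fst \<theta>)) - ?J b1 (?s + ln (fst \<theta>))
      = Gamma (2 * \<alpha>) * X1 * d * (d + 2 * (ln (b1 * fst \<theta>) - ln (1 + v)))"
    "?J b2 (c + ln (snd \<theta>)) - ?J b2 (?s + ln (snd \<theta>))
      = Gamma (2 * \<alpha>) * X2 * d * (d + 2 * (ln (b2 * snd \<theta>) - ln (1 + v)))"
    using gamma_ln_sq_dev_diff[OF b(3) b(1), of "c + ln (fst \<theta>)" "?s + ln (fst \<theta>)"]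
      gamma_ln_sq_dev_diff[OF b(3) b(2), of "c + ln (snd \<theta>)" "?s + ln (snd \<theta>)"] b t
    unfolding X1_def X2_def d_def phi_star_def by (simp_all add: ln_mult algebra_simps)
  then have "(?J b1 (c + ln (fst \<theta>)) + ?J b2 (c + ln (snd \<theta>))) - (?J b1 (?s + ln (fst \<theta>)) + ?J b2 (?s + ln (snd \<theta>)))
      = Gamma (2 * \<alpha>) * d * (d * (X1 + X2) + 2 * ?K)"
    by (simp add: algebra_simps)
  also have "\<dots> > 0"
    using c K b unfolding d_def X1_def X2_def by (intro mult_pos_pos add_pos_nonneg) auto
  finally have less: "?J b1 (?s + ln (fst \<theta>)) + ?J b2 (?s + ln (snd \<theta>)) < ?J b1 (c + ln (fst \<theta>)) + ?J b2 (c + ln (snd \<theta>))"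
    by simp
  obtain C where "0 < C"
    and eq: "\<And>c. cond_risk \<alpha> \<theta> v c = ennreal (C * (?J b1 (c + ln (fst \<theta>)) + ?J b2 (c + ln (snd \<theta>))))"
    using cond_risk_eq_gamma_ln_sq_dev[OF \<alpha> t v] unfolding b1_def b2_def by blast
  show ?thesis unfolding eq using less \<open>0 < C\<close>
    by (simp add: ennreal_less_iff add_nonneg_nonneg gamma_ln_sq_dev_nonneg)
qed

lemma emeasure_V_vimage_eq_0:
  assumes T[measurable]: "T \<in> sets borel" and null: "emeasure lborel {v \<in> T. 1 < v} = 0"
  shows "emeasure (joint_law \<alpha> \<theta>) {x \<in> space (joint_law \<alpha> \<theta>). V x \<in> T} = 0"
proof -
  define F where "F x = ennreal (joint_dens \<alpha> \<theta> x) * indicator {x. V x \<in> T} x" for x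
  have [measurable]: "F \<in> borel_measurable (lborel \<Otimes>\<^sub>M lborel)" unfolding F_def[abs_def] by measurable
  have "AE v in lborel. v \<notin> {v \<in> T. 1 < v}" using null by (intro AE_not_in) auto
  then have fibre_null: "AE v in lborel.
      (\<integral>\<^sup>+s. ennreal s * indicator {1<..} v * (F (s, s * v) + F (s * v, s)) \<partial>lborel) = 0"
  proof eventually_elim
    case (elim v)
    have "ennreal s * indicator {1<..} v * (F (s, s * v) + F (s * v, s)) = 0" for s
      using elim by (cases "0 < s \<and> 1 < v")
        (auto simp: F_def Z1_V_H_M_scaled_snd Z1_V_H_M_scaled_fst indicator_def ennreal_neg)
    then show ?case by (simp del: mult_eq_0_iff)
  qed
  have "emeasure (joint_law \<alpha> \<theta>) {x \<in> space (joint_law \<alpha> \<theta>). V x \<in> T} = (\<integral>\<^sup>+x. F x \<partial>(lborel \<Otimes>\<^sub>M lborel))"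
    using measurable_sets[OF V_measurable, of T] unfolding joint_law_eq_density F_def
    by (subst emeasure_density) (auto simp: space_pair_measure vimage_def intro!: nn_integral_cong)
  also have "\<dots> = (\<integral>\<^sup>+v. \<integral>\<^sup>+s. ennreal s * indicator {1<..} v * (F (s, s * v) + F (s * v, s)) \<partial>lborel \<partial>lborel)"
    by (rule nn_integral_lborel_pair_min_ratio) (auto simp: F_def joint_dens_def gamma_dens_nonpos_eq_0)
  also have "\<dots> = 0" using fibre_null by (simp add: nn_integral_0_iff_AE)
  finally show ?thesis .
qed

lemma
  assumes \<alpha>: "0 < \<alpha>" and t: "0 < fst \<theta>" "0 < snd \<theta>"
  shows cond_risk_phi_I_le: "cond_risk \<alpha> \<theta> v (phi_I \<alpha> \<psi> v) \<le> cond_risk \<alpha> \<theta> v (\<psi> v)"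
    and cond_risk_phi_I_less: "1 < v \<Longrightarrow> v \<le> lam \<alpha> \<Longrightarrow> phi_star \<alpha> v < \<psi> v
           \<Longrightarrow> cond_risk \<alpha> \<theta> v (phi_I \<alpha> \<psi> v) < cond_risk \<alpha> \<theta> v (\<psi> v)"
proof -
  show less: "cond_risk \<alpha> \<theta> v (phi_I \<alpha> \<psi> v) < cond_risk \<alpha> \<theta> v (\<psi> v)"
    if "1 < v" "v \<le> lam \<alpha>" "phi_star \<alpha> v < \<psi> v"
  proof -
    have "v - 1 \<le> 1 / (2 * \<alpha>)" using that(2) unfolding lam_def by simp
    then have "2 * \<alpha> * (v - 1) \<le> 1" using \<alpha> by (simp add: field_simps)
    then show ?thesis using cond_risk_phi_star_less[OF \<alpha> t that(1) _ that(3)] that by (simp add: phi_I_def)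
  qed
  show "cond_risk \<alpha> \<theta> v (phi_I \<alpha> \<psi> v) \<le> cond_risk \<alpha> \<theta> v (\<psi> v)"
    using less[THEN less_imp_le] by (cases "1 < v") (auto simp: phi_I_def cond_risk_le_1)
qed

lemma phi_I_measurable [measurable]:
  assumes [measurable]: "\<psi> \<in> borel_measurable borel"
  shows "phi_I \<alpha> \<psi> \<in> borel_measurable borel"
  unfolding phi_I_def[abs_def] phi_star_def[abs_def] by measurable

lemma risk_phi_I_le:
  assumes \<alpha>: "0 < \<alpha>" and \<theta>: "\<theta> \<in> Theta" and \<psi>[measurable]: "\<psi> \<in> borel_measurable borel"
  shows "risk \<alpha> \<theta> (d_phi (phi_I \<alpha> \<psi>)) \<le> risk \<alpha> \<theta> (d_phi \<psi>)"
proof -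
  have t: "0 < fst \<theta>" "0 < snd \<theta>" using \<theta> by (auto simp: Theta_def)
  note \<psi>_I = phi_I_measurable[OF \<psi>]
  show ?thesis
    unfolding risk_d_phi_eq_cond_risk[OF \<alpha> t \<psi>] risk_d_phi_eq_cond_risk[OF \<alpha> t \<psi>_I]
    by (intro nn_integral_mono cond_risk_phi_I_le[OF \<alpha> t])
qed

lemma risk_phi_I_less:
  assumes \<alpha>: "0 < \<alpha>" and \<theta>: "\<theta> \<in> Theta" and \<psi>[measurable]: "\<psi> \<in> borel_measurable borel"
    and finite: "risk \<alpha> \<theta> (d_phi \<psi>) < \<infinity>"
    and improved: "emeasure lborel {v. 1 < v \<and> v \<le> lam \<alpha> \<and> phi_star \<alpha> v < \<psi> v} \<noteq> 0"
  shows "risk \<alpha> \<theta> (d_phi (phi_I \<alpha> \<psi>)) < risk \<alpha> \<theta> (d_phi \<psi>)"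
proof -
  have t: "0 < fst \<theta>" "0 < snd \<theta>" using \<theta> by (auto simp: Theta_def)
  note \<psi>_I = phi_I_measurable[OF \<psi>]
  define T where "T = {v. 1 < v \<and> v \<le> lam \<alpha> \<and> phi_star \<alpha> v < \<psi> v}"
  have [measurable]: "T \<in> sets borel" unfolding T_def phi_star_def by measurable
  have "\<not> (AE v in lborel. v \<notin> T)"
    using improved unfolding T_def[symmetric] by (subst AE_iff_measurable[OF _ refl]) auto
  moreover have "AE v in lborel. v \<notin> T"
    if "AE v in lborel. cond_risk \<alpha> \<theta> v (\<psi> v) \<le> cond_risk \<alpha> \<theta> v (phi_I \<alpha> \<psi> v)"
    using that
  proof eventually_elim
    case (elim v)
    then show ?case using cond_risk_phi_I_less[OF \<alpha> t, where v = v and \<psi> = \<psi>] unfolding T_def by auto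
  qed
  ultimately have "\<not> (AE v in lborel. cond_risk \<alpha> \<theta> v (\<psi> v) \<le> cond_risk \<alpha> \<theta> v (phi_I \<alpha> \<psi> v))"
    by blast
  moreover have "(\<integral>\<^sup>+v. cond_risk \<alpha> \<theta> v (phi_I \<alpha> \<psi> v) \<partial>lborel) \<noteq> \<infinity>"
    using finite risk_phi_I_le[OF \<alpha> \<theta> \<psi>]
    unfolding risk_d_phi_eq_cond_risk[OF \<alpha> t \<psi>] risk_d_phi_eq_cond_risk[OF \<alpha> t \<psi>_I]
    by (simp add: top.not_eq_extremum)
  ultimately show ?thesis
    unfolding risk_d_phi_eq_cond_risk[OF \<alpha> t \<psi>] risk_d_phi_eq_cond_risk[OF \<alpha> t \<psi>_I]
    by (intro nn_integral_less AE_I2 cond_risk_phi_I_le[OF \<alpha> t]) auto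
qed

lemma measurable_max_restrict_space:
  assumes "f \<in> borel_measurable (restrict_space borel {a..})"
  shows "(\<lambda>x. f (max a x)) \<in> borel_measurable (borel :: real measure)"
proof -
  have "(\<lambda>x::real. max a x) \<in> borel \<rightarrow>\<^sub>M restrict_space borel {a..}"
    by (rule measurable_restrict_space2) auto
  from measurable_comp[OF this assms] show ?thesis by (simp add: comp_def)
qed

lemma emeasure_improvement_set_neq_0:
  assumes \<psi>[measurable]: "\<psi> \<in> borel_measurable borel" and agree: "\<And>v. 1 \<le> v \<Longrightarrow> \<psi> v = \<phi> v"
    and pos: "0 < emeasure (joint_law \<alpha> \<theta>)
      {x \<in> space (joint_law \<alpha> \<theta>). V x \<le> lam \<alpha> \<and> \<phi> (V x) > phi_star \<alpha> (V x)}"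
  shows "emeasure lborel {v. 1 < v \<and> v \<le> lam \<alpha> \<and> phi_star \<alpha> v < \<psi> v} \<noteq> 0"
proof -
  define T where "T = {v. v \<le> lam \<alpha> \<and> phi_star \<alpha> v < \<psi> v}"
  have [measurable]: "T \<in> sets borel" unfolding T_def phi_star_def by measurable
  have "emeasure (joint_law \<alpha> \<theta>) {x \<in> space (joint_law \<alpha> \<theta>). V x \<le> lam \<alpha> \<and> \<phi> (V x) > phi_star \<alpha> (V x)}
      \<le> emeasure (joint_law \<alpha> \<theta>) {x \<in> space (joint_law \<alpha> \<theta>). V x \<in> T}"
  proof (rule emeasure_mono_AE)
    show "AE x in joint_law \<alpha> \<theta>. x \<in> {x \<in> space (joint_law \<alpha> \<theta>). V x \<le> lam \<alpha> \<and> \<phi> (V x) > phi_star \<alpha> (V x)}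
        \<longrightarrow> x \<in> {x \<in> space (joint_law \<alpha> \<theta>). V x \<in> T}"
      using AE_joint_law_pos by eventually_elim (use V_ge_1 agree in \<open>auto simp: T_def\<close>)
    show "{x \<in> space (joint_law \<alpha> \<theta>). V x \<in> T} \<in> sets (joint_law \<alpha> \<theta>)"
      unfolding joint_law_eq_density sets_density space_density by measurable
  qed
  with pos have "emeasure lborel {v \<in> T. 1 < v} \<noteq> 0"
    using emeasure_V_vimage_eq_0[of T \<alpha> \<theta>] by auto
  then show ?thesis unfolding T_def by (simp add: conj_commute conj_left_commute)
qed

theorem theorem3p2:
  fixes \<alpha> :: real and \<phi> :: "real \<Rightarrow> real"
  assumes "\<alpha> > 0"
    and "\<phi> \<in> borel_measurable (restrict_space borel {1..})"
    and "\<forall>\<theta>\<in>Theta. risk \<alpha> \<theta> (d_phi \<phi>) < \<infinity>"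
    and "\<exists>\<theta>\<in>Theta. emeasure (joint_law \<alpha> \<theta>)
           {x \<in> space (joint_law \<alpha> \<theta>). V x \<le> lam \<alpha> \<and> \<phi> (V x) > phi_star \<alpha> (V x)} > 0"
  shows "dominates \<alpha> (d_phi (phi_I \<alpha> \<phi>)) (d_phi \<phi>)"
proof -
  define \<phi>1 where "\<phi>1 v = \<phi> (max 1 v)" for v
  have \<phi>1: "\<phi>1 \<in> borel_measurable borel"
    unfolding \<phi>1_def using measurable_max_restrict_space[OF assms(2)] .
  have agree: "\<phi>1 v = \<phi> v" if "1 \<le> v" for v using that by (simp add: \<phi>1_def)
  have risk_\<phi>1: "risk \<alpha> \<theta> (d_phi \<phi>) = risk \<alpha> \<theta> (d_phi \<phi>1)"
    "risk \<alpha> \<theta> (d_phi (phi_I \<alpha> \<phi>)) = risk \<alpha> \<theta> (d_phi (phi_I \<alpha> \<phi>1))" for \<theta>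
    by (auto intro!: risk_d_phi_cong simp: agree phi_I_def)
  obtain \<theta>0 where \<theta>0: "\<theta>0 \<in> Theta" and pos: "0 < emeasure (joint_law \<alpha> \<theta>0)
      {x \<in> space (joint_law \<alpha> \<theta>0). V x \<le> lam \<alpha> \<and> \<phi> (V x) > phi_star \<alpha> (V x)}"
    using assms(4) by blast
  show ?thesis
    unfolding dominates_def risk_\<phi>1
    using risk_phi_I_le[OF assms(1) _ \<phi>1] assms(3) \<theta>0
      risk_phi_I_less[OF assms(1) \<theta>0 \<phi>1 _ emeasure_improvement_set_neq_0[OF \<phi>1 agree pos]]
    by (auto simp: risk_\<phi>1)
qed

end
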